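(* The parameterized problem Multicolored Independent Set does not belong to LOCAL-FPT. That is, there is no computable function $f$ and no LOCAL algorithm that, on every instance $(G,k)$ of Multicolored Independent Set, terminates within $f(k)$ rounds and decides correctly (with disjunctive acceptance) whether $(G,k)$ is a yes-instance.
   Context: Distributed models. A network is a finite connected undirected graph $G$ with $n=|V(G)|$ nodes; every node has a unique identifier of $O(\log n)$ bits. Initially each node knows only its own identifier, the identifiers of its neighbours, its own input labels, and the parameter $k$. Computation proceeds in synchronous rounds; in each round each node performs arbitrary local computation, sends messages and receives the messages sent to it. In the LOCAL model messages to neighbours have unbounded size. The running time is the number of rounds until all nodes have terminated. For $s,t\in\mathbb N$, $\mathcal G_{s,t}$ denotes the set of finite connected graphs $G$ equipped with unary predicates $P_1,\dots,P_s\subseteq V(G)$ and binary predicates $E_1,\dots,E_t\subseteq V(G)^2$. A parameterized decision problem is a set $\mathsf P\subseteq\mathcal G_{s,t}\times\mathbb N$; instances are pairs $(G,k)$, $k$ being the parameter. A distributed algorithm decides $\mathsf P$ if on every instance $(G,k)$ (run on network $G$, every node knowing $k$) every node terminates with output accept or reject, and $(G,k)\in\mathsf P$ iff at least one node accepts. LOCAL-FPT is the class of parameterized problems decided by a LOCAL algorithm that terminates within $f(k)$ rounds on every instance $(G,k)$, for some computable function $f$. Multicolored Independent Set: an instance is an integer $k\ge 1$ and a graph $G\in\mathcal G_{k,1}$ (the binary predicate being the edge relation), where each vertex lies in at most one of the colour classes $P_1,\dots,P_k$; it is a yes-instance iff there are vertices $v_1\in P_1,\dots,v_k\in P_k$ that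 are pairwise non-adjacent. The parameter is $k$. *)

theory Defs
  imports Main
begin

text \<open>A network has vertex set V (a finite set of natural numbers); each vertex IS its
  unique identifier. The identifiers
  have O(log n) bits, i.e. they lie in {0..<n^c} for a constant c.\<close>

definition nbrs :: "(nat \<times> nat) set \<Rightarrow> nat \<Rightarrow> nat set" where
  "nbrs E v = {u. (v, u) \<in> E}"

definition network :: "nat set \<Rightarrow> (nat \<times> nat) set \<Rightarrow> bool" where
  "network V E \<longleftrightarrow> finite V \<and> V \<noteq> {} \<and> E \<subseteq> V \<times> V \<and> sym E \<and> irrefl E
     \<and> (\<forall>u\<in>V. \<forall>v\<in>V. (u, v) \<in> E\<^sup>*)"

definition ids_bounded :: "nat \<Rightarrow> nat set \<Rightarrow> bool" where
  "ids_bounded c V \<longleftrightarrow> V \<subseteq> {..< card V ^ c}"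

text \<open>Instance: k \<ge> 1, network (V,E), colour classes P 1, ..., P k \<subseteq> V, each vertex in
  at most one class (the binary predicate E_1 is the edge relation E itself).\<close>

definition mcis_instance :: "nat set \<Rightarrow> (nat \<times> nat) set \<Rightarrow> (nat \<Rightarrow> nat set) \<Rightarrow> nat \<Rightarrow> bool" where
  "mcis_instance V E P k \<longleftrightarrow> k \<ge> 1 \<and> network V E \<and> (\<forall>i\<in>{1..k}. P i \<subseteq> V)
     \<and> (\<forall>i\<in>{1..k}. \<forall>j\<in>{1..k}. i \<noteq> j \<longrightarrow> P i \<inter> P j = {})"

definition mcis_yes :: "nat set \<Rightarrow> (nat \<times> nat) set \<Rightarrow> (nat \<Rightarrow> nat set) \<Rightarrow> nat \<Rightarrow> bool" where
  "mcis_yes V E P k \<longleftrightarrow> (\<exists>x :: nat \<Rightarrow> nat. (\<forall>i\<in>{1..k}. x i \<in> P i)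
     \<and> (\<forall>i\<in>{1..k}. \<forall>j\<in>{1..k}. i \<noteq> j \<longrightarrow> (x i, x j) \<notin> E))"

text \<open>States of type 's, messages of type 'm (arbitrary, i.e. unbounded size).
  init k v N L: initial state of node with identifier v, neighbour identifiers N,
    input labels L (the indices i of the colour classes P i containing v), parameter k.
  msg s u: message sent in state s to the neighbour with identifier u.
  step s R: new state after receiving R u (Some message from neighbour u, None if no message).
  out s: None = not yet terminated, Some True = accept, Some False = reject.
  A terminated node keeps its state (and output) and sends no further messages.\<close>

record ('s, 'm) local_alg =
  init :: "nat \<Rightarrow> nat \<Rightarrow> nat set \<Rightarrow> nat set \<Rightarrow> 's"
  msg  :: "'s \<Rightarrow> nat \<Rightarrow> 'm"
  step :: "'s \<Rightarrow> (nat \<Rightarrow> 'm option) \<Rightarrow> 's"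
  out  :: "'s \<Rightarrow> bool option"

fun run :: "('s, 'm) local_alg \<Rightarrow> (nat \<times> nat) set \<Rightarrow> (nat \<Rightarrow> nat set) \<Rightarrow> nat
             \<Rightarrow> nat \<Rightarrow> nat \<Rightarrow> 's" where
  "run A E P k 0 v = init A k v (nbrs E v) {i \<in> {1..k}. v \<in> P i}"
| "run A E P k (Suc t) v =
     (if out A (run A E P k t v) \<noteq> None then run A E P k t v
      else step A (run A E P k t v)
        (\<lambda>u. if u \<in> nbrs E v \<and> out A (run A E P k t u) = None
             then Some (msg A (run A E P k t u) v) else None))"

definition mcis_local_fpt_alg :: "nat \<Rightarrow> ('s, 'm) local_alg \<Rightarrow> (nat \<Rightarrow> nat) \<Rightarrow> bool" where
  "mcis_local_fpt_alg c A f \<longleftrightarrow>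
     (\<forall>V E P k. mcis_instance V E P k \<and> ids_bounded c V \<longrightarrow>
        (\<forall>v\<in>V. out A (run A E P k (f k) v) \<noteq> None)
      \<and> ((\<exists>v\<in>V. out A (run A E P k (f k) v) = Some True) \<longleftrightarrow> mcis_yes V E P k))"

end

theory Submission
  imports Defs
begin

text \<open>Within r = f 2 rounds a node only sees the labels at distance at most r. On a path
  of 2r + 4 nodes place two adjacent colour pairs, one at each end and 2r apart: the
  instance is a yes-instance (pick one endpoint from each pair), so some node accepts.
  That node sees at most one of the pairs, so it also accepts the instance in which the
  other pair is deleted; but with a single adjacent pair the instance is a no-instance.\<close>

definition nbhd :: "(nat \<times> nat) set \<Rightarrow> nat \<Rightarrow> nat \<Rightarrow> nat set" where
  "nbhd E t v = {u. \<exists>j\<le>t. (v, u) \<in> E ^^ j}"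

lemma nbhd_Suc_mono: "nbhd E t v \<subseteq> nbhd E (Suc t) v"
  unfolding nbhd_def using le_SucI by blast

lemma nbhd_nbr_subset:
  assumes "u \<in> nbrs E v"
  shows "nbhd E t u \<subseteq> nbhd E (Suc t) v"
proof
  fix w assume "w \<in> nbhd E t u"
  then obtain j where "j \<le> t" "(u, w) \<in> E ^^ j" unfolding nbhd_def by blast
  moreover have "(v, u) \<in> E" using assms by (simp add: nbrs_def)
  ultimately have "(v, w) \<in> E ^^ Suc j" by (intro relpow_Suc_I2)
  with \<open>j \<le> t\<close> show "w \<in> nbhd E (Suc t) v"
    unfolding nbhd_def by (blast intro: Suc_le_mono[THEN iffD2])
qed

lemma run_eq_if_labels_eq_on_nbhd:
  assumes "\<forall>u\<in>nbhd E t v. {i\<in>{1..k}. u \<in> P i} = {i\<in>{1..k}. u \<in> P' i}"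
  shows "run A E P k t v = run A E P' k t v"
  using assms
proof (induction t arbitrary: v)
  case 0
  have "v \<in> nbhd E 0 v" by (simp add: nbhd_def)
  with 0 show ?case by simp
next
  case (Suc t)
  have self: "run A E P k t v = run A E P' k t v"
    using Suc nbhd_Suc_mono by blast
  have nbr: "run A E P k t u = run A E P' k t u" if "u \<in> nbrs E v" for u
    using Suc nbhd_nbr_subset[OF that] by blast
  have "(\<lambda>u. if u \<in> nbrs E v \<and> out A (run A E P k t u) = None
             then Some (msg A (run A E P k t u) v) else None)
      = (\<lambda>u. if u \<in> nbrs E v \<and> out A (run A E P' k t u) = None
             then Some (msg A (run A E P' k t u) v) else None)"
    by (rule ext) (auto simp: nbr)
  then show ?case by (simp only: run.simps self)
qed

definition path_edges :: "nat \<Rightarrow> (nat \<times> nat) set" where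
  "path_edges n = {(i, j). i < n \<and> j < n \<and> (j = i + 1 \<or> i = j + 1)}"

lemma path_edges_rtrancl:
  assumes "u \<le> v" "v < n"
  shows "(u, v) \<in> (path_edges n)\<^sup>* \<and> (v, u) \<in> (path_edges n)\<^sup>*"
  using assms
proof (induction v)
  case (Suc v)
  show ?case
  proof (cases "u = Suc v")
    case False
    then have "(u, v) \<in> (path_edges n)\<^sup>* \<and> (v, u) \<in> (path_edges n)\<^sup>*" using Suc by auto
    moreover have "(v, Suc v) \<in> path_edges n" "(Suc v, v) \<in> path_edges n"
      using Suc.prems by (auto simp: path_edges_def)
    ultimately show ?thesis by (meson rtrancl.rtrancl_into_rtrancl converse_rtrancl_into_rtrancl)
  qed simp
qed simp

lemma network_path: "n \<ge> 1 \<Longrightarrow> network {0..<n} (path_edges n)"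
  unfolding network_def
proof (intro conjI ballI)
  fix u v assume "u \<in> {0..<n}" "v \<in> {0..<n}"
  then show "(u, v) \<in> (path_edges n)\<^sup>*"
    using path_edges_rtrancl[of u v n] path_edges_rtrancl[of v u n] by (cases "u \<le> v") auto
qed (auto simp: path_edges_def sym_def irrefl_def)

lemma path_edges_relpow_dist:
  "(u, w) \<in> path_edges n ^^ j \<Longrightarrow> w \<le> u + j \<and> u \<le> w + j"
  by (induction j arbitrary: w) (fastforce simp: path_edges_def)+

lemma run_path_eq_if_labels_eq_nearby:
  assumes "\<forall>u. u \<le> v + t \<and> v \<le> u + t \<longrightarrow> {i\<in>{1..k}. u \<in> P i} = {i\<in>{1..k}. u \<in> P' i}"
  shows "run A (path_edges n) P k t v = run A (path_edges n) P' k t v"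
proof (rule run_eq_if_labels_eq_on_nbhd, intro ballI)
  fix u assume "u \<in> nbhd (path_edges n) t v"
  then have "u \<le> v + t \<and> v \<le> u + t"
    by (auto simp: nbhd_def dest: path_edges_relpow_dist)
  with assms show "{i\<in>{1..k}. u \<in> P i} = {i\<in>{1..k}. u \<in> P' i}" by blast
qed

lemma ids_bounded_atLeast0LessThan: "c \<ge> 1 \<Longrightarrow> ids_bounded c {0..<n}"
  unfolding ids_bounded_def
proof -
  assume "c \<ge> 1"
  then have "n \<le> n ^ c"
    by (cases n) (simp_all add: self_le_power)
  then show "{0..<n} \<subseteq> {..<card {0..<n} ^ c}" by auto
qed

definition two_classes :: "nat set \<Rightarrow> nat set \<Rightarrow> nat \<Rightarrow> nat set" where
  "two_classes X Y = (\<lambda>i. if i = 1 then X else if i = 2 then Y else {})"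

lemma atLeastAtMost_1_2: "{1..2::nat} = {1, 2}"
  by auto

lemma mcis_instance_two_classes:
  "mcis_instance V E (two_classes X Y) 2 \<longleftrightarrow> network V E \<and> X \<subseteq> V \<and> Y \<subseteq> V \<and> X \<inter> Y = {}"
  unfolding mcis_instance_def two_classes_def atLeastAtMost_1_2 by auto

lemma mcis_yes_two_classes:
  "mcis_yes V E (two_classes X Y) 2 \<longleftrightarrow> (\<exists>x\<in>X. \<exists>y\<in>Y. (x, y) \<notin> E \<and> (y, x) \<notin> E)"
proof
  assume "mcis_yes V E (two_classes X Y) 2"
  then obtain x :: "nat \<Rightarrow> nat" where "x 1 \<in> X" "x 2 \<in> Y" "(x 1, x 2) \<notin> E" "(x 2, x 1) \<notin> E"
    unfolding mcis_yes_def two_classes_def atLeastAtMost_1_2 by fastforce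
  then show "\<exists>x\<in>X. \<exists>y\<in>Y. (x, y) \<notin> E \<and> (y, x) \<notin> E" by blast
next
  assume "\<exists>x\<in>X. \<exists>y\<in>Y. (x, y) \<notin> E \<and> (y, x) \<notin> E"
  then obtain x y where "x \<in> X" "y \<in> Y" "(x, y) \<notin> E" "(y, x) \<notin> E" by blast
  then show "mcis_yes V E (two_classes X Y) 2"
    unfolding mcis_yes_def
    by (intro exI[of _ "\<lambda>i. if i = 1 then x else y"]) (auto simp: two_classes_def)
qed

lemma labels_two_classes_eq:
  assumes "u \<in> X \<longleftrightarrow> u \<in> X'" "u \<in> Y \<longleftrightarrow> u \<in> Y'"
  shows "{i\<in>{1..2}. u \<in> two_classes X Y i} = {i\<in>{1..2}. u \<in> two_classes X' Y' i}"
  using assms by (auto simp: two_classes_def)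

theorem mainTheorem1:
  fixes c :: nat
  assumes "c \<ge> 1"
  shows "\<not> (\<exists>(A :: ('s, 'm) local_alg) (f :: nat \<Rightarrow> nat). mcis_local_fpt_alg c A f)"
proof
  assume "\<exists>(A :: ('s, 'm) local_alg) (f :: nat \<Rightarrow> nat). mcis_local_fpt_alg c A f"
  then obtain A :: "('s, 'm) local_alg" and f where alg: "mcis_local_fpt_alg c A f" by blast
  define r where "r = f 2"
  define b where "b = 2 * r + 2"
  define n where "n = b + 2"
  let ?E = "path_edges n" and ?V = "{0..<n}"
  have decides: "(\<exists>v\<in>?V. out A (run A ?E (two_classes X Y) 2 r v) = Some True)
      \<longleftrightarrow> (\<exists>x\<in>X. \<exists>y\<in>Y. (x, y) \<notin> ?E \<and> (y, x) \<notin> ?E)"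
    if "X \<subseteq> ?V" "Y \<subseteq> ?V" "X \<inter> Y = {}" for X Y
    using alg that network_path[of n] ids_bounded_atLeast0LessThan[OF assms]
    unfolding mcis_local_fpt_alg_def r_def
    by (simp add: mcis_instance_two_classes mcis_yes_two_classes n_def)
  obtain v where "v \<in> ?V"
    and acc: "out A (run A ?E (two_classes {0, b} {1, b + 1}) 2 r v) = Some True"
    using decides[of "{0, b}" "{1, b + 1}"] by (auto simp: n_def b_def path_edges_def)
  show False
  proof (cases "v + r < b")
    case True
    have "run A ?E (two_classes {0, b} {1, b + 1}) 2 r v = run A ?E (two_classes {0} {1}) 2 r v"
      by (rule run_path_eq_if_labels_eq_nearby, intro allI impI labels_two_classes_eq)
        (use True in auto)
    with acc decides[of "{0}" "{1}"] \<open>v \<in> ?V\<close> show False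
      by (auto simp: n_def b_def path_edges_def)
  next
    case False
    have "run A ?E (two_classes {0, b} {1, b + 1}) 2 r v = run A ?E (two_classes {b} {b + 1}) 2 r v"
      by (rule run_path_eq_if_labels_eq_nearby, intro allI impI labels_two_classes_eq)
        (use False in \<open>auto simp: b_def\<close>)
    with acc decides[of "{b}" "{b + 1}"] \<open>v \<in> ?V\<close> show False
      by (auto simp: n_def b_def path_edges_def)
  qed
qed

end
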